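(* Let $\alpha\in\mathbb{R}$ and $0<\beta\le\frac14$. Suppose $F_2(\alpha,\beta)$ has Property A, $t\in\mathfrak{T}_1(F_1(\alpha,\beta)-F_1(\alpha,\beta))$, and $\Theta_\alpha(t)\ge0$ on $\mathbb{T}^2$. Then $t\in\mathfrak{U}_1(F_1(\alpha,\beta))$.
   Context: $\mathbb{T}=\mathbb{R}/\mathbb{Z}$, $e_j(x)=e^{2\pi i jx}$. $\mathfrak{T}_d$ is the algebra of trigonometric polynomials on $\mathbb{T}^d$; $\mathfrak{T}_d^+=\{t\in\mathfrak{T}_d:t\ge0\}$; for $F\subseteq\mathbb{Z}^d$, $\mathfrak{T}_d(F)=\{t\in\mathfrak{T}_d:\mathrm{freq}(t)\subseteq F\}$, $\mathfrak{T}_d^+(F)=\mathfrak{T}_d^+\cap\mathfrak{T}_d(F)$, $\mathfrak{S}_d(F)=\{|p|^2:p\in\mathfrak{T}_d(F)\}$, and $\mathfrak{U}_d(F)=\mathfrak{T}_d\cap\overline{\mathfrak{S}_d(F)}$ (closure in the sup norm on $C(\mathbb{T}^d)$). $F\subseteq\mathbb{Z}^d$ has Property A if $\mathfrak{U}_d(F)=\mathfrak{T}_d^+(F-F)$. For $\alpha\in\mathbb{R}$, $\theta_\alpha(j)$ is the smallest integer minimizing $|\theta_\alpha(j)-j\alpha|$, and $\Theta_\alpha(t)(x,y)=\sum_j\widehat t(j)e_j(x)e_{\theta_\alpha(j)}(y)$ for $t\in\mathfrak{T}_1$. $F_1(\alpha,\beta)=\{j\in\mathbb{Z}:|\theta_\alpha(j)-j\alpha|<\beta\}$,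 $F_2(\alpha,\beta)=\{(j,k)\in\mathbb{Z}^2:|k-j\alpha|<\beta\}$. *)

theory Defs
  imports Complex_Main "HOL-Library.Product_Plus"
begin

(* Trigonometric polynomials are represented by their (finitely supported)
   Fourier coefficient functions  c :: 'f => complex, where the frequency
   type 'f is int (d = 1) or int * int (d = 2).  Points of T^d are represented
   by real numbers / pairs of reals (all functions involved are 1-periodic). *)

definition ch1 :: "int \<Rightarrow> real \<Rightarrow> complex" where
  "ch1 j x = exp (2 * of_real pi * \<i> * of_real (of_int j * x))"

definition ch2 :: "int \<times> int \<Rightarrow> real \<times> real \<Rightarrow> complex" where
  "ch2 jk xy = exp (2 * of_real pi * \<i> *
      of_real (of_int (fst jk) * fst xy + of_int (snd jk) * snd xy))"

definition freq :: "('f \<Rightarrow> complex) \<Rightarrow> 'f set" where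
  "freq c = {j. c j \<noteq> 0}"

definition trig_eval :: "('f \<Rightarrow> 'p \<Rightarrow> complex) \<Rightarrow> ('f \<Rightarrow> complex) \<Rightarrow> 'p \<Rightarrow> complex" where
  "trig_eval ch c p = (\<Sum>j\<in>freq c. c j * ch j p)"

definition trigpolys :: "'f set \<Rightarrow> ('f \<Rightarrow> complex) set" where
  "trigpolys F = {c. finite (freq c) \<and> freq c \<subseteq> F}"

definition trig_nonneg :: "('f \<Rightarrow> 'p \<Rightarrow> complex) \<Rightarrow> ('f \<Rightarrow> complex) \<Rightarrow> bool" where
  "trig_nonneg ch c \<longleftrightarrow> (\<forall>p. Im (trig_eval ch c p) = 0 \<and> Re (trig_eval ch c p) \<ge> 0)"

definition trigpolys_pos :: "('f \<Rightarrow> 'p \<Rightarrow> complex) \<Rightarrow> 'f set \<Rightarrow> ('f \<Rightarrow> complex) set" where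
  "trigpolys_pos ch F = {c \<in> trigpolys F. trig_nonneg ch c}"

definition Uset :: "('f \<Rightarrow> 'p \<Rightarrow> complex) \<Rightarrow> 'f set \<Rightarrow> ('f \<Rightarrow> complex) set" where
  "Uset ch F = {c. finite (freq c) \<and>
     (\<forall>\<epsilon>>0. \<exists>q\<in>trigpolys F. \<forall>p. cmod (trig_eval ch c p - of_real ((cmod (trig_eval ch q p))\<^sup>2)) \<le> \<epsilon>)}"

definition diffset :: "'f::ab_group_add set \<Rightarrow> 'f set" where
  "diffset F = {a - b | a b. a \<in> F \<and> b \<in> F}"

definition propertyA :: "('f::ab_group_add \<Rightarrow> 'p \<Rightarrow> complex) \<Rightarrow> 'f set \<Rightarrow> bool" where
  "propertyA ch F \<longleftrightarrow> Uset ch F = trigpolys_pos ch (diffset F)"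

definition theta :: "real \<Rightarrow> int \<Rightarrow> int" where
  "theta \<alpha> j = (THE n::int. (\<forall>m::int. \<bar>of_int n - of_int j * \<alpha>\<bar> \<le> \<bar>of_int m - of_int j * \<alpha>\<bar>) \<and>
      (\<forall>m::int. \<bar>of_int m - of_int j * \<alpha>\<bar> \<le> \<bar>of_int n - of_int j * \<alpha>\<bar> \<longrightarrow> n \<le> m))"

definition Theta :: "real \<Rightarrow> (int \<Rightarrow> complex) \<Rightarrow> (int \<times> int \<Rightarrow> complex)" where
  "Theta \<alpha> t = (\<lambda>(j, k). if k = theta \<alpha> j then t j else 0)"

definition F1 :: "real \<Rightarrow> real \<Rightarrow> int set" where
  "F1 \<alpha> \<beta> = {j. \<bar>of_int (theta \<alpha> j) - of_int j * \<alpha>\<bar> < \<beta>}"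

definition F2 :: "real \<Rightarrow> real \<Rightarrow> (int \<times> int) set" where
  "F2 \<alpha> \<beta> = {(j, k). \<bar>of_int k - of_int j * \<alpha>\<bar> < \<beta>}"

end

theory Submission
  imports Defs
begin

(* For \<beta> \<le> 1/2 the set F2(\<alpha>,\<beta>) is exactly the graph
   {(j, \<theta>_\<alpha>(j)) : j \<in> F1(\<alpha>,\<beta>)}, because an integer k within \<beta> < 1/2 of j\<alpha>
   is necessarily the nearest integer \<theta>_\<alpha>(j).  Moreover \<theta>_\<alpha> is additive on
   differences of F1(\<alpha>,\<beta>) (errors below 1/4 add up to less than 1/2), so
   \<Theta>_\<alpha> maps \<T>_1(F1 - F1) into \<T>_2(F2 - F2).  Hence, if \<Theta>_\<alpha>(t) \<ge> 0, Property A
   of F2 puts \<Theta>_\<alpha>(t) into \<U>_2(F2).  Finally, restricting to the line y = 0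
   turns any polynomial supported on the graph of a function h into the 1-variable
   polynomial with coefficients c(j, h j); applied to \<Theta>_\<alpha>(t) (giving t) and to the
   approximants |q|^2 with q \<in> \<T>_2(F2) (giving |p|^2 with p \<in> \<T>_1(F1)), this
   transports the approximation back and shows t \<in> \<U>_1(F1). *)

lemma int_near_same_real_eq:
  fixes m n :: int and x :: real
  assumes "\<bar>of_int m - x\<bar> < 1/2" and "\<bar>of_int n - x\<bar> < 1/2"
  shows "m = n"
proof -
  have "\<bar>of_int (m - n)\<bar> < (1::real)"
    using assms by linarith
  hence "\<bar>m - n\<bar> < 1"
    by (metis of_int_abs of_int_less_1_iff)
  thus ?thesis by linarith
qed

text \<open>An integer within 1/2 of j\<alpha> is the value \<theta>_\<alpha>(j): it is the unique
  minimiser of the distance, so it also satisfies the tie-breaking clause.\<close>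

lemma theta_unique:
  fixes n j :: int
  assumes near: "\<bar>of_int n - of_int j * \<alpha>\<bar> < 1/2"
  shows "theta \<alpha> j = n"
proof -
  let ?d = "\<lambda>m::int. \<bar>of_int m - of_int j * \<alpha>\<bar>"
  have only_near: "m = n" if "?d m \<le> ?d n" for m
    using int_near_same_real_eq[of m "of_int j * \<alpha>" n] that near by linarith
  have minimal: "?d n \<le> ?d m" for m
    using only_near[of m] by (cases "?d m \<le> ?d n") auto
  show ?thesis
    unfolding theta_def
  proof (rule the_equality)
    show "(\<forall>m. ?d n \<le> ?d m) \<and> (\<forall>m. ?d m \<le> ?d n \<longrightarrow> n \<le> m)"
      using minimal only_near by auto
  next
    fix n' assume "(\<forall>m. ?d n' \<le> ?d m) \<and> (\<forall>m. ?d m \<le> ?d n' \<longrightarrow> n' \<le> m)"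
    hence "?d n' \<le> ?d n" by blast
    thus "n' = n" by (rule only_near)
  qed
qed

definition theta_graph :: "real \<Rightarrow> int \<Rightarrow> int \<times> int" where
  "theta_graph \<alpha> j = (j, theta \<alpha> j)"

lemma inj_theta_graph: "inj (theta_graph \<alpha>)"
  by (rule injI) (simp add: theta_graph_def)

lemma F2_eq_graph_F1:
  assumes "\<beta> \<le> 1/2"
  shows "F2 \<alpha> \<beta> = theta_graph \<alpha> ` F1 \<alpha> \<beta>"
proof
  show "F2 \<alpha> \<beta> \<subseteq> theta_graph \<alpha> ` F1 \<alpha> \<beta>"
  proof
    fix jk assume "jk \<in> F2 \<alpha> \<beta>"
    then obtain j k where jk: "jk = (j, k)" and close: "\<bar>of_int k - of_int j * \<alpha>\<bar> < \<beta>"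
      unfolding F2_def by blast
    have "theta \<alpha> j = k"
      using close assms by (intro theta_unique) linarith
    with close have "j \<in> F1 \<alpha> \<beta>" and "jk = theta_graph \<alpha> j"
      by (simp_all add: F1_def theta_graph_def jk)
    thus "jk \<in> theta_graph \<alpha> ` F1 \<alpha> \<beta>" by blast
  qed
  show "theta_graph \<alpha> ` F1 \<alpha> \<beta> \<subseteq> F2 \<alpha> \<beta>"
    by (auto simp: F1_def F2_def theta_graph_def)
qed

text \<open>For \<beta> \<le> 1/4, \<theta>_\<alpha> is additive on differences of F1(\<alpha>,\<beta>), so the graph map
  sends F1 - F1 into F2 - F2.\<close>

lemma theta_graph_diffset:
  assumes "\<beta> \<le> 1/4" and "j \<in> diffset (F1 \<alpha> \<beta>)"
  shows "theta_graph \<alpha> j \<in> diffset (F2 \<alpha> \<beta>)"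
proof -
  obtain a b where j: "j = a - b" and a: "a \<in> F1 \<alpha> \<beta>" and b: "b \<in> F1 \<alpha> \<beta>"
    using assms(2) unfolding diffset_def by blast
  have "\<bar>of_int (theta \<alpha> a - theta \<alpha> b) - of_int j * \<alpha>\<bar> < 1/2"
    using a b assms(1) unfolding F1_def j of_int_diff abs_less_iff
    by (simp add: algebra_simps)
  hence "theta \<alpha> j = theta \<alpha> a - theta \<alpha> b"
    by (rule theta_unique)
  hence "theta_graph \<alpha> j = theta_graph \<alpha> a - theta_graph \<alpha> b"
    by (simp add: theta_graph_def j)
  moreover have "theta_graph \<alpha> a \<in> F2 \<alpha> \<beta>" "theta_graph \<alpha> b \<in> F2 \<alpha> \<beta>"
    using a b assms(1) F2_eq_graph_F1[of \<beta> \<alpha>] by auto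
  ultimately show ?thesis
    unfolding diffset_def by blast
qed

lemma freq_comp: "freq (c \<circ> g) = g -` freq c"
  by (auto simp: freq_def)

lemma trigpolys_comp_inj:
  assumes "inj g" and "c \<in> trigpolys (g ` F)"
  shows "c \<circ> g \<in> trigpolys F"
proof -
  have "g -` freq c \<subseteq> F"
  proof
    fix x assume "x \<in> g -` freq c"
    hence "g x \<in> g ` F"
      using assms(2) by (auto simp: trigpolys_def)
    thus "x \<in> F"
      using assms(1) by (simp add: inj_image_mem_iff)
  qed
  moreover have "finite (g -` freq c)"
    using assms by (intro finite_vimageI) (simp_all add: trigpolys_def)
  ultimately show ?thesis
    by (simp add: trigpolys_def freq_comp)
qed

lemma freq_Theta: "freq (Theta \<alpha> t) = theta_graph \<alpha> ` freq t"
  by (auto simp: freq_def Theta_def theta_graph_def split: if_splits)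

lemma Theta_comp_graph: "Theta \<alpha> t \<circ> theta_graph \<alpha> = t"
  by (simp add: fun_eq_iff Theta_def theta_graph_def)

lemma trig_eval_on_graph:
  fixes c :: "int \<times> int \<Rightarrow> complex" and h :: "int \<Rightarrow> int"
  defines "g \<equiv> \<lambda>j. (j, h j)"
  assumes "freq c \<subseteq> range g"
  shows "trig_eval ch2 c (x, 0) = trig_eval ch1 (c \<circ> g) x"
proof -
  have inj: "inj g"
    unfolding g_def by (rule injI) simp
  have support: "freq c = g ` freq (c \<circ> g)"
    using assms(2) by (auto simp: freq_comp)
  have "trig_eval ch2 c (x, 0) = (\<Sum>j\<in>freq (c \<circ> g). c (g j) * ch2 (g j) (x, 0))"
    unfolding trig_eval_def support by (simp add: sum.reindex[OF inj_on_subset[OF inj]])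
  also have "\<dots> = trig_eval ch1 (c \<circ> g) x"
    by (simp add: trig_eval_def g_def ch1_def ch2_def)
  finally show ?thesis .
qed

text \<open>Restriction to y = 0 maps \<U>_2(F2(\<alpha>,\<beta>)) into \<U>_1(F1(\<alpha>,\<beta>)): each
  approximant |q|^2 with q \<in> \<T>_2(F2) restricts to |p|^2 with p = q \<circ> theta_graph.\<close>

lemma Uset_F2_restrict:
  assumes "\<beta> \<le> 1/2"
    and cU: "c \<in> Uset ch2 (F2 \<alpha> \<beta>)"
    and c_graph: "freq c \<subseteq> range (theta_graph \<alpha>)"
  shows "c \<circ> theta_graph \<alpha> \<in> Uset ch1 (F1 \<alpha> \<beta>)"
proof -
  have graph_eval: "trig_eval ch2 d (x, 0) = trig_eval ch1 (d \<circ> theta_graph \<alpha>) x"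
    if "freq d \<subseteq> range (theta_graph \<alpha>)" for d x
    using trig_eval_on_graph[of d "theta \<alpha>"] that
    by (simp add: theta_graph_def[abs_def])
  have "finite (freq (c \<circ> theta_graph \<alpha>))"
    using cU inj_theta_graph by (auto simp: Uset_def freq_comp intro: finite_vimageI)
  moreover have "\<exists>p\<in>trigpolys (F1 \<alpha> \<beta>). \<forall>x.
      cmod (trig_eval ch1 (c \<circ> theta_graph \<alpha>) x - of_real ((cmod (trig_eval ch1 p x))\<^sup>2)) \<le> \<epsilon>"
    if "\<epsilon> > 0" for \<epsilon>
  proof -
    obtain q where q: "q \<in> trigpolys (F2 \<alpha> \<beta>)"
      and approx: "\<And>xy. cmod (trig_eval ch2 c xy - of_real ((cmod (trig_eval ch2 q xy))\<^sup>2)) \<le> \<epsilon>"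
      using cU \<open>\<epsilon> > 0\<close> unfolding Uset_def by blast
    have q_graph: "freq q \<subseteq> range (theta_graph \<alpha>)"
      using q F2_eq_graph_F1[OF assms(1)] by (auto simp: trigpolys_def)
    have "q \<circ> theta_graph \<alpha> \<in> trigpolys (F1 \<alpha> \<beta>)"
      using q F2_eq_graph_F1[OF assms(1)] by (simp add: trigpolys_comp_inj inj_theta_graph)
    moreover have "cmod (trig_eval ch1 (c \<circ> theta_graph \<alpha>) x
        - of_real ((cmod (trig_eval ch1 (q \<circ> theta_graph \<alpha>) x))\<^sup>2)) \<le> \<epsilon>" for x
      using approx[of "(x, 0)"] by (simp add: graph_eval c_graph q_graph)
    ultimately show ?thesis by blast
  qed
  ultimately show ?thesis
    unfolding Uset_def by blast
qed

theorem corollary1: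
  fixes \<alpha> \<beta> :: real and t :: "int \<Rightarrow> complex"
  assumes "0 < \<beta>" and "\<beta> \<le> 1/4"
    and "propertyA ch2 (F2 \<alpha> \<beta>)"
    and "t \<in> trigpolys (diffset (F1 \<alpha> \<beta>))"
    and "trig_nonneg ch2 (Theta \<alpha> t)"
  shows "t \<in> Uset ch1 (F1 \<alpha> \<beta>)"
proof -
  have "freq (Theta \<alpha> t) \<subseteq> diffset (F2 \<alpha> \<beta>)"
    using assms(2,4) theta_graph_diffset by (auto simp: freq_Theta trigpolys_def)
  moreover have "finite (freq (Theta \<alpha> t))"
    using assms(4) by (simp add: freq_Theta trigpolys_def)
  ultimately have "Theta \<alpha> t \<in> trigpolys_pos ch2 (diffset (F2 \<alpha> \<beta>))"
    using assms(5) by (simp add: trigpolys_pos_def trigpolys_def)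
  hence "Theta \<alpha> t \<in> Uset ch2 (F2 \<alpha> \<beta>)"
    using assms(3) by (simp add: propertyA_def)
  hence "Theta \<alpha> t \<circ> theta_graph \<alpha> \<in> Uset ch1 (F1 \<alpha> \<beta>)"
    using assms(2) by (intro Uset_F2_restrict) (auto simp: freq_Theta)
  thus ?thesis
    by (simp add: Theta_comp_graph)
qed

end
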